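(* Let $\mathcal{M}$ be a finite (or countable) set of models with target probability mass function $p(\cdot\mid\boldsymbol{y})$ on $\mathcal{M}$, and let $q_S(\mathcal{S}\mid\mathfrak{m})$, $q_o(\mathfrak{m}_k\mid\mathcal{S},\mathfrak{m})$, $q_r(\mathfrak{m}'\mid\mathcal{S},\mathfrak{m}_k)$ be probability mass functions (over populations, models and models, respectively). Assume $\mathfrak{m}\sim p(\cdot\mid\boldsymbol{y})$, generate $\mathcal{S}'\sim q_S(\cdot\mid\mathfrak{m})$, $\mathfrak{m}_k'\sim q_o(\cdot\mid\mathcal{S}',\mathfrak{m})$, $\mathfrak{m}'\sim q_r(\cdot\mid\mathcal{S}',\mathfrak{m}_k')$, and backward auxiliary variables $\mathcal{S}\sim q_S(\cdot\mid\mathfrak{m}')$, $\mathfrak{m}_k\sim q_o(\cdot\mid\mathcal{S},\mathfrak{m}')$. Accept $\mathfrak{m}'$ if both (1) $\mathfrak{m}'$ is preliminarily accepted with probability $\min\{1,p(\mathfrak{m}'\mid\boldsymbol{y})/p(\mathfrak{m}\mid\boldsymbol{y})\}$, and (2) it is then finally accepted with probability $\min\{1,q_r(\mathfrak{m}\mid\mathcal{S},\mathfrak{m}_k)/q_r(\mathfrak{m}'\mid\mathcal{S}',\mathfrak{m}_k')\}$; let $\mathfrak{m}^*=\mathfrak{m}'$ if accepted and $\mathfrak{m}^*=\mathfrak{m}$ otherwise. Then $\mathfrak{m}^*\sim p(\cdot\mid\boldsymbol{y})$.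
   Context: This is the delayed-acceptance version of the reversible genetically modified mode jumping MCMC (RGMJMCMC) step: from the current model a new population of features $\mathcal{S}'$ is proposed, local search within it gives $\mathfrak{m}_k'$, randomization gives the proposal $\mathfrak{m}'$, and backward auxiliary variables $(\mathcal{S},\mathfrak{m}_k)$ are generated from $\mathfrak{m}'$ (only needed if the preliminary acceptance occurs). $p(\mathfrak{m}\mid\boldsymbol{y})$ is the posterior model probability. *)

theory Defs
  imports "HOL-Probability.Probability"
begin

definition da_rgmjmcmc_step ::
  "'m pmf \<Rightarrow> ('m \<Rightarrow> 's pmf) \<Rightarrow> ('s \<Rightarrow> 'm \<Rightarrow> 'm pmf) \<Rightarrow> ('s \<Rightarrow> 'm \<Rightarrow> 'm pmf)
    \<Rightarrow> 'm \<Rightarrow> 'm pmf" where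
  "da_rgmjmcmc_step p qS qo qr m =
     bind_pmf (qS m) (\<lambda>S'.
     bind_pmf (qo S' m) (\<lambda>mk'.
     bind_pmf (qr S' mk') (\<lambda>m'.
     bind_pmf (bernoulli_pmf (min 1 (pmf p m' / pmf p m))) (\<lambda>a1.
       if a1 then
         bind_pmf (qS m') (\<lambda>S.
         bind_pmf (qo S m') (\<lambda>mk.
         bind_pmf (bernoulli_pmf (min 1 (pmf (qr S mk) m / pmf (qr S' mk') m'))) (\<lambda>a2.
           return_pmf (if a2 then m' else m))))
       else return_pmf m))))"

end

theory Submission
  imports Defs
begin

text \<open>The step satisfies detailed balance with respect to p, hence leaves p invariant.
For m \<noteq> m', the probability flux p(m) K(m, m') is the expectation, over the forward
auxiliary variables (S', mk') drawn from m and the backward ones (S, mk) drawn from m', of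
  min (p m) (p m') * min (qr(m' | S', mk')) (qr(m | S, mk)),
because a * min 1 (b / a) = min a b. Exchanging m and m' together with the roles of the
forward and backward auxiliary variables leaves this expectation unchanged.\<close>

lemma nn_integral_measure_pmf_commute:
  "(\<integral>\<^sup>+x. \<integral>\<^sup>+y. f x y \<partial>measure_pmf B \<partial>measure_pmf A) =
   (\<integral>\<^sup>+y. \<integral>\<^sup>+x. f x y \<partial>measure_pmf A \<partial>measure_pmf B)"
proof -
  have "(\<integral>\<^sup>+x. \<integral>\<^sup>+y. f x y \<partial>measure_pmf B \<partial>measure_pmf A) = (\<integral>\<^sup>+z. case_prod f z \<partial>pair_pmf A B)"
    by (simp add: nn_integral_pair_pmf')
  also have "\<dots> = (\<integral>\<^sup>+y. \<integral>\<^sup>+x. f x y \<partial>measure_pmf A \<partial>measure_pmf B)"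
    by (subst pair_commute_pmf) (simp add: nn_integral_pair_pmf' case_prod_beta)
  finally show ?thesis .
qed

lemma nn_integral_measure_pmf_commute_pairs:
  fixes A :: "'a pmf" and B :: "'a \<Rightarrow> 'b pmf" and C :: "'c pmf" and D :: "'c \<Rightarrow> 'd pmf"
  shows "(\<integral>\<^sup>+a. \<integral>\<^sup>+b. \<integral>\<^sup>+c. \<integral>\<^sup>+d. f a b c d \<partial>D c \<partial>C \<partial>B a \<partial>A) =
   (\<integral>\<^sup>+c. \<integral>\<^sup>+d. \<integral>\<^sup>+a. \<integral>\<^sup>+b. f a b c d \<partial>B a \<partial>A \<partial>D c \<partial>C)"
proof -
  have "(\<integral>\<^sup>+a. \<integral>\<^sup>+b. \<integral>\<^sup>+c. \<integral>\<^sup>+d. f a b c d \<partial>D c \<partial>C \<partial>B a \<partial>A) =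
        (\<integral>\<^sup>+a. \<integral>\<^sup>+c. \<integral>\<^sup>+b. \<integral>\<^sup>+d. f a b c d \<partial>D c \<partial>B a \<partial>C \<partial>A)"
    by (intro nn_integral_cong nn_integral_measure_pmf_commute)
  also have "\<dots> = (\<integral>\<^sup>+c. \<integral>\<^sup>+a. \<integral>\<^sup>+b. \<integral>\<^sup>+d. f a b c d \<partial>D c \<partial>B a \<partial>A \<partial>C)"
    by (rule nn_integral_measure_pmf_commute)
  also have "\<dots> = (\<integral>\<^sup>+c. \<integral>\<^sup>+a. \<integral>\<^sup>+d. \<integral>\<^sup>+b. f a b c d \<partial>B a \<partial>D c \<partial>A \<partial>C)"
    by (intro nn_integral_cong nn_integral_measure_pmf_commute)
  also have "\<dots> = (\<integral>\<^sup>+c. \<integral>\<^sup>+d. \<integral>\<^sup>+a. \<integral>\<^sup>+b. f a b c d \<partial>B a \<partial>A \<partial>D c \<partial>C)"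
    by (intro nn_integral_cong nn_integral_measure_pmf_commute)
  finally show ?thesis .
qed

lemma bind_pmf_eq_if_detailed_balance:
  assumes "\<And>x y. pmf p x * pmf (K x) y = pmf p y * pmf (K y) x"
  shows "bind_pmf p K = p"
proof (rule pmf_eqI)
  fix y
  have "ennreal (pmf (bind_pmf p K) y) =
      (\<integral>\<^sup>+x. ennreal (pmf p x) * ennreal (pmf (K x) y) \<partial>count_space UNIV)"
    by (simp add: ennreal_pmf_bind nn_integral_measure_pmf)
  also have "\<dots> = (\<integral>\<^sup>+x. ennreal (pmf p y) * ennreal (pmf (K y) x) \<partial>count_space UNIV)"
    by (intro nn_integral_cong) (simp add: ennreal_mult'[symmetric] assms)
  also have "\<dots> = ennreal (pmf p y)"
    by (simp add: nn_integral_cmult nn_integral_pmf)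
  finally show "pmf (bind_pmf p K) y = pmf p y"
    by simp
qed

lemma mult_min_1_divide:
  fixes a b :: real
  assumes "0 \<le> a" "0 \<le> b"
  shows "a * min 1 (b / a) = min a b"
  using assms by (cases "a = 0") (auto simp: min_def field_simps)

lemma pmf_bind_bernoulli_if_return:
  assumes "y \<noteq> x" "0 \<le> a" "a \<le> 1"
  shows "pmf (bind_pmf (bernoulli_pmf a) (\<lambda>b. if b then M else return_pmf x)) y = a * pmf M y"
  using assms by (simp add: pmf_bind)

lemma pmf_bind_bernoulli_return_if:
  assumes "y \<noteq> x" "0 \<le> a" "a \<le> 1"
  shows "pmf (bind_pmf (bernoulli_pmf a) (\<lambda>b. return_pmf (if b then z else x))) y = of_bool (z = y) * a"
  using assms by (simp add: pmf_bind indicator_def)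

lemma ennreal_pmf_da_rgmjmcmc_step:
  assumes "x \<noteq> y"
  shows "ennreal (pmf (da_rgmjmcmc_step p qS qo qr x) y) =
    (\<integral>\<^sup>+S'. \<integral>\<^sup>+mk'. \<integral>\<^sup>+S. \<integral>\<^sup>+mk.
       ennreal (pmf (qr S' mk') y * min 1 (pmf p y / pmf p x) * min 1 (pmf (qr S mk) x / pmf (qr S' mk') y))
     \<partial>qo S y \<partial>qS y \<partial>qo S' x \<partial>qS x)"
proof -
  define final where "final S' mk' m' =
    bind_pmf (qS m') (\<lambda>S. bind_pmf (qo S m') (\<lambda>mk.
    bind_pmf (bernoulli_pmf (min 1 (pmf (qr S mk) x / pmf (qr S' mk') m'))) (\<lambda>a2.
      return_pmf (if a2 then m' else x))))" for S' mk' m'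
  have final_at_y: "ennreal (pmf (final S' mk' m') y) = of_bool (m' = y) *
      (\<integral>\<^sup>+S. \<integral>\<^sup>+mk. ennreal (min 1 (pmf (qr S mk) x / pmf (qr S' mk') y)) \<partial>qo S y \<partial>qS y)"
    for S' mk' m'
    using assms by (simp add: final_def ennreal_pmf_bind pmf_bind_bernoulli_return_if)
  have "ennreal (pmf (da_rgmjmcmc_step p qS qo qr x) y) =
      (\<integral>\<^sup>+S'. \<integral>\<^sup>+mk'. \<integral>\<^sup>+m'. ennreal (min 1 (pmf p m' / pmf p x)) * ennreal (pmf (final S' mk' m') y)
       \<partial>qr S' mk' \<partial>qo S' x \<partial>qS x)"
    unfolding da_rgmjmcmc_step_def final_def[symmetric] using assms
    by (simp add: ennreal_pmf_bind pmf_bind_bernoulli_if_return ennreal_mult')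
  also have "\<dots> = (\<integral>\<^sup>+S'. \<integral>\<^sup>+mk'. ennreal (pmf (qr S' mk') y) * ennreal (min 1 (pmf p y / pmf p x)) *
      (\<integral>\<^sup>+S. \<integral>\<^sup>+mk. ennreal (min 1 (pmf (qr S mk) x / pmf (qr S' mk') y)) \<partial>qo S y \<partial>qS y)
       \<partial>qo S' x \<partial>qS x)"
    by (intro nn_integral_cong, subst nn_integral_measure_pmf_support[of "{y}"])
      (auto simp: final_at_y mult_ac)
  finally show ?thesis
    by (simp add: nn_integral_cmult[symmetric] ennreal_mult'[symmetric] mult.assoc)
qed

lemma da_rgmjmcmc_step_flux:
  assumes "x \<noteq> y"
  shows "ennreal (pmf p x) * ennreal (pmf (da_rgmjmcmc_step p qS qo qr x) y) =
    (\<integral>\<^sup>+S'. \<integral>\<^sup>+mk'. \<integral>\<^sup>+S. \<integral>\<^sup>+mk.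
       ennreal (min (pmf p x) (pmf p y) * min (pmf (qr S' mk') y) (pmf (qr S mk) x))
     \<partial>qo S y \<partial>qS y \<partial>qo S' x \<partial>qS x)"
proof -
  have flux_density:
    "pmf p x * (pmf (qr S' mk') y * min 1 (pmf p y / pmf p x) * min 1 (pmf (qr S mk) x / pmf (qr S' mk') y))
     = min (pmf p x) (pmf p y) * min (pmf (qr S' mk') y) (pmf (qr S mk) x)" for S' mk' S mk
  proof -
    have "pmf p x * (pmf (qr S' mk') y * min 1 (pmf p y / pmf p x) * min 1 (pmf (qr S mk) x / pmf (qr S' mk') y))
      = (pmf p x * min 1 (pmf p y / pmf p x)) *
        (pmf (qr S' mk') y * min 1 (pmf (qr S mk) x / pmf (qr S' mk') y))"
      by (simp add: mult_ac)
    then show ?thesis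
      by (simp add: mult_min_1_divide)
  qed
  show ?thesis
    unfolding ennreal_pmf_da_rgmjmcmc_step[OF assms]
    by (simp add: nn_integral_cmult[symmetric] ennreal_mult'[symmetric] flux_density)
qed

lemma da_rgmjmcmc_step_detailed_balance:
  "pmf p x * pmf (da_rgmjmcmc_step p qS qo qr x) y = pmf p y * pmf (da_rgmjmcmc_step p qS qo qr y) x"
proof (cases "x = y")
  case False
  have "ennreal (pmf p x) * ennreal (pmf (da_rgmjmcmc_step p qS qo qr x) y) =
        ennreal (pmf p y) * ennreal (pmf (da_rgmjmcmc_step p qS qo qr y) x)"
    unfolding da_rgmjmcmc_step_flux[OF False] da_rgmjmcmc_step_flux[OF False[symmetric]]
    by (subst nn_integral_measure_pmf_commute_pairs) (simp add: min.commute)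
  then show ?thesis
    by (simp add: ennreal_mult'[symmetric])
qed simp

theorem theorem3:
  fixes p :: "'m pmf"
    and qS :: "'m \<Rightarrow> 's pmf"
    and qo :: "'s \<Rightarrow> 'm \<Rightarrow> 'm pmf"
    and qr :: "'s \<Rightarrow> 'm \<Rightarrow> 'm pmf"
  shows "bind_pmf p (da_rgmjmcmc_step p qS qo qr) = p"
  using da_rgmjmcmc_step_detailed_balance by (rule bind_pmf_eq_if_detailed_balance)

end
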